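(* On $\mathrm{Mon}_+$ consider the relation $\varphi_0\sim\varphi_1$ iff there exist $v\in L^2([0,1],H^1_0([0,1]))$ and a Lagrangian flow $\varphi$ associated with $v$ such that $\varphi(0,x)=\varphi_0(x)$ and $\varphi(1,x)=\varphi_1(x)$ for all $x\in[0,1]$. This relation is symmetric and transitive, and in fact $\varphi_0\sim\varphi_1$ holds for every pair $\varphi_0,\varphi_1\in\mathrm{Mon}_+$.
   Context: $\mathrm{Mon}_+$ denotes the set of nondecreasing functions $f:[0,1]\to[0,1]$ with $f(0)=0$ and $f(1)=1$. Definition (Lagrangian flow): let $v\in L^1([0,1],C([0,1]))$. A map $\varphi:[0,1]\times[0,1]\to[0,1]$, $(t,x)\mapsto\varphi(t,x)$, is a Lagrangian flow associated with $v$ if (i) $x\mapsto\varphi(t,x)$ is nondecreasing for every $t$, and (ii) for every $x$ the map $t\mapsto\varphi(t,x)$ is absolutely continuous and $\varphi(t,x)-\varphi(s,x)=\int_s^t v(r,\varphi(r,x))\,dr$ for all $0\le s<t\le 1$. *)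

theory Defs
  imports "HOL-Analysis.Analysis"
begin

definition Mon_plus :: "(real \<Rightarrow> real) set" where
  "Mon_plus = {f. mono_on {0..1} f \<and> f ` {0..1} \<subseteq> {0..1} \<and> f 0 = 0 \<and> f 1 = 1}"

definition abs_cont_on :: "real \<Rightarrow> real \<Rightarrow> (real \<Rightarrow> real) \<Rightarrow> bool" where
  "abs_cont_on a b f \<longleftrightarrow>
     (\<forall>\<epsilon>>0. \<exists>\<delta>>0. \<forall>(n::nat) (I :: nat \<Rightarrow> real \<times> real).
        (\<forall>i<n. a \<le> fst (I i) \<and> fst (I i) \<le> snd (I i) \<and> snd (I i) \<le> b) \<and>
        (\<forall>i<n. \<forall>j<n. i \<noteq> j \<longrightarrow> snd (I i) \<le> fst (I j) \<or> snd (I j) \<le> fst (I i)) \<and>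
        (\<Sum>i<n. snd (I i) - fst (I i)) < \<delta>
        \<longrightarrow> (\<Sum>i<n. \<bar>f (snd (I i)) - f (fst (I i))\<bar>) < \<epsilon>)"

text \<open>u belongs to H^1_0([0,1]) with weak derivative g: g is square integrable on [0,1],
  u(x) = int_0^x g for x in [0,1], and u(1) = 0 (u(0) = 0 is then automatic).\<close>
definition H10_with_deriv :: "(real \<Rightarrow> real) \<Rightarrow> (real \<Rightarrow> real) \<Rightarrow> bool" where
  "H10_with_deriv u g \<longleftrightarrow>
     g \<in> borel_measurable lborel \<and>
     set_integrable lborel {0..1} (\<lambda>y. (g y)\<^sup>2) \<and>
     set_integrable lborel {0..1} g \<and>
     (\<forall>x\<in>{0..1}. u x = (LINT y:{0..x}|lborel. g y)) \<and>
     u 1 = 0"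

text \<open>v \<in> L^2([0,1], H^1_0([0,1])), represented by a (time-pointwise) representative
  v t = v(t,.) with jointly measurable spatial derivative w(t,.) and
  int_0^1 ||v(t)||_{H^1_0}^2 dt = int int w^2 < infinity.\<close>
definition L2_H10 :: "(real \<Rightarrow> real \<Rightarrow> real) \<Rightarrow> bool" where
  "L2_H10 v \<longleftrightarrow>
     (\<exists>w :: real \<Rightarrow> real \<Rightarrow> real.
        (\<lambda>p. w (fst p) (snd p)) \<in> borel_measurable (borel :: (real \<times> real) measure) \<and>
        set_integrable (lborel :: (real \<times> real) measure) ({0..1} \<times> {0..1})
           (\<lambda>p. (w (fst p) (snd p))\<^sup>2) \<and>
        (\<forall>t\<in>{0..1}. H10_with_deriv (v t) (w t)))"

definition lagrangian_flow :: "(real \<Rightarrow> real \<Rightarrow> real) \<Rightarrow> (real \<Rightarrow> real \<Rightarrow> real) \<Rightarrow> bool" where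
  "lagrangian_flow v \<phi> \<longleftrightarrow>
     (\<forall>t\<in>{0..1}. \<forall>x\<in>{0..1}. \<phi> t x \<in> {0..1}) \<and>
     (\<forall>t\<in>{0..1}. mono_on {0..1} (\<phi> t)) \<and>
     (\<forall>x\<in>{0..1}. abs_cont_on 0 1 (\<lambda>t. \<phi> t x) \<and>
        (\<forall>s t. 0 \<le> s \<and> s < t \<and> t \<le> 1 \<longrightarrow>
           set_integrable lborel {s..t} (\<lambda>r. v r (\<phi> r x)) \<and>
           \<phi> t x - \<phi> s x = (LINT r:{s..t}|lborel. v r (\<phi> r x))))"

definition flow_rel :: "(real \<Rightarrow> real) \<Rightarrow> (real \<Rightarrow> real) \<Rightarrow> bool" where
  "flow_rel \<phi>0 \<phi>1 \<longleftrightarrow>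
     (\<exists>v \<phi>. L2_H10 v \<and> lagrangian_flow v \<phi> \<and>
        (\<forall>x\<in>{0..1}. \<phi> 0 x = \<phi>0 x \<and> \<phi> 1 x = \<phi>1 x))"

end

theory Submission
  imports Defs
begin

text \<open>Every \<open>f \<in> Mon\<^sub>+\<close> can be squeezed onto the constant map \<open>1/2\<close> and every \<open>g\<close> grown
  back out of it: the flow \<open>\<phi>(t,x) = 1/2 + c(t) (f x - 1/2)\<close> for \<open>t \<le> 1/2\<close> and
  \<open>\<phi>(t,x) = 1/2 + c(t) (g x - 1/2)\<close> for \<open>t \<ge> 1/2\<close>, with \<open>c(t) = cos\<^sup>2(\<pi> t)\<close>, moves every
  point with velocity \<open>(c'/c)(y - 1/2)\<close> on the image \<open>[(1-c)/2, (1+c)/2]\<close> of \<open>[0,1]\<close>.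
  Extending this field affinely to vanish at \<open>0\<close> and \<open>1\<close> gives an \<open>H\<^sup>1\<^sub>0\<close> field of squared
  norm \<open>c'\<^sup>2/c + c'\<^sup>2/(1-c) = 4\<pi>\<^sup>2\<close>, uniformly in \<open>t\<close>. Hence any two elements of
  \<open>Mon\<^sub>+\<close> are related, and symmetry and transitivity follow trivially.\<close>

lemma abs_cont_on_lipschitz:
  fixes F :: "real \<Rightarrow> real"
  assumes lip: "\<And>s t. a \<le> s \<Longrightarrow> s \<le> t \<Longrightarrow> t \<le> b \<Longrightarrow> \<bar>F t - F s\<bar> \<le> L * (t - s)"
    and "L > 0"
  shows "abs_cont_on a b F"
  unfolding abs_cont_on_def
proof (intro allI impI exI[where x = "\<epsilon> / L" for \<epsilon>] conjI)
  fix \<epsilon> :: real and n :: nat and I :: "nat \<Rightarrow> real \<times> real"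
  assume "\<epsilon> > 0"
  then show "\<epsilon> / L > 0" using \<open>L > 0\<close> by simp
  assume I: "(\<forall>i<n. a \<le> fst (I i) \<and> fst (I i) \<le> snd (I i) \<and> snd (I i) \<le> b) \<and>
    (\<forall>i<n. \<forall>j<n. i \<noteq> j \<longrightarrow> snd (I i) \<le> fst (I j) \<or> snd (I j) \<le> fst (I i)) \<and>
    (\<Sum>i<n. snd (I i) - fst (I i)) < \<epsilon> / L"
  have "(\<Sum>i<n. \<bar>F (snd (I i)) - F (fst (I i))\<bar>) \<le> (\<Sum>i<n. L * (snd (I i) - fst (I i)))"
    using I by (intro sum_mono lip) auto
  also have "\<dots> = L * (\<Sum>i<n. snd (I i) - fst (I i))"
    by (simp add: sum_distrib_left)
  also have "\<dots> < L * (\<epsilon> / L)"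
    using I \<open>L > 0\<close> by (intro mult_strict_left_mono) auto
  finally show "(\<Sum>i<n. \<bar>F (snd (I i)) - F (fst (I i))\<bar>) < \<epsilon>"
    using \<open>L > 0\<close> by simp
qed

lemma set_integrable_square_of_bounded_sections:
  fixes w :: "real \<Rightarrow> real \<Rightarrow> real"
  assumes meas: "(\<lambda>p. w (fst p) (snd p)) \<in> borel_measurable borel"
    and A: "A \<in> sets borel" "emeasure lborel A < \<infinity>" and C: "C \<in> sets borel"
    and sections: "\<And>t. t \<in> A \<Longrightarrow> set_integrable lborel C (\<lambda>y. (w t y)\<^sup>2)"
    and bound: "\<And>t. t \<in> A \<Longrightarrow> (LINT y:C|lborel. (w t y)\<^sup>2) \<le> B"
  shows "set_integrable lborel (A \<times> C) (\<lambda>p. (w (fst p) (snd p))\<^sup>2)"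
proof -
  define F :: "real \<times> real \<Rightarrow> real"
    where "F = (\<lambda>p. indicator (A \<times> C) p * (w (fst p) (snd p))\<^sup>2)"
  have "A \<times> C \<in> sets borel"
    using A C by (auto simp flip: borel_prod)
  then have F_meas: "F \<in> borel_measurable borel"
    unfolding F_def by (intro borel_measurable_times borel_measurable_indicator
        borel_measurable_power meas)
  have section_bound: "(\<integral>\<^sup>+y. ennreal (F (t, y)) \<partial>lborel) \<le> ennreal B * indicator A t" for t
  proof (cases "t \<in> A")
    case True
    have "(\<integral>\<^sup>+y. ennreal (F (t, y)) \<partial>lborel) = (\<integral>\<^sup>+y. ennreal (indicator C y * (w t y)\<^sup>2) \<partial>lborel)"
      using True by (auto simp: F_def indicator_def intro!: nn_integral_cong)
    also have "\<dots> = ennreal (LINT y:C|lborel. (w t y)\<^sup>2)"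
      using sections[OF True] unfolding set_integrable_def set_lebesgue_integral_def
      by (simp add: nn_integral_eq_integral)
    also have "\<dots> \<le> ennreal B * indicator A t"
      using bound[OF True] True by (simp add: ennreal_leI)
    finally show ?thesis .
  qed (simp add: F_def indicator_def)
  have "(\<integral>\<^sup>+p. ennreal (F p) \<partial>lborel) = (\<integral>\<^sup>+t. \<integral>\<^sup>+y. ennreal (F (t, y)) \<partial>lborel \<partial>lborel)"
    using F_meas unfolding lborel_prod[symmetric]
    by (intro lborel.nn_integral_fst[symmetric]) (simp add: lborel_prod measurable_lborel1)
  also have "\<dots> \<le> (\<integral>\<^sup>+t. ennreal B * indicator A t \<partial>lborel)"
    by (intro nn_integral_mono section_bound)
  also have "\<dots> < \<infinity>"
    using A by (simp add: nn_integral_cmult_indicator ennreal_mult_less_top)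
  finally have "integrable lborel F"
    using F_meas by (intro integrableI_nonneg) (auto simp: F_def measurable_lborel1)
  then show ?thesis
    by (simp add: set_integrable_def F_def)
qed

definition ramp :: "real \<Rightarrow> real \<Rightarrow> real \<Rightarrow> real \<Rightarrow> real \<Rightarrow> real" where
  "ramp \<alpha> \<beta> p q y = \<alpha> * y + (\<beta> - \<alpha>) * max 0 (min y q - p)"

definition ramp_slope :: "real \<Rightarrow> real \<Rightarrow> real \<Rightarrow> real \<Rightarrow> real \<Rightarrow> real" where
  "ramp_slope \<alpha> \<beta> p q y = \<alpha> + (\<beta> - \<alpha>) * indicator {p..q} y"

lemma ramp_on_interval: "p \<le> y \<Longrightarrow> y \<le> q \<Longrightarrow> ramp \<alpha> \<beta> p q y = \<alpha> * p + \<beta> * (y - p)"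
  by (simp add: ramp_def algebra_simps)

lemma ramp_one: "0 \<le> p \<Longrightarrow> p \<le> q \<Longrightarrow> q \<le> 1 \<Longrightarrow> ramp \<alpha> \<beta> p q 1 = \<alpha> * (1 - (q - p)) + \<beta> * (q - p)"
  by (simp add: ramp_def algebra_simps)

lemma borel_measurable_ramp_slope_param:
  fixes \<alpha> \<beta> p q :: "real \<Rightarrow> real"
  assumes [measurable]: "\<alpha> \<in> borel_measurable borel" "\<beta> \<in> borel_measurable borel"
    "p \<in> borel_measurable borel" "q \<in> borel_measurable borel"
  shows "(\<lambda>z. ramp_slope (\<alpha> (fst z)) (\<beta> (fst z)) (p (fst z)) (q (fst z)) (snd z))
    \<in> borel_measurable borel"
proof -
  have eq: "(\<lambda>z. ramp_slope (\<alpha> (fst z)) (\<beta> (fst z)) (p (fst z)) (q (fst z)) (snd z))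
      = (\<lambda>z. \<alpha> (fst z) + (\<beta> (fst z) - \<alpha> (fst z))
           * (if p (fst z) \<le> snd z \<and> snd z \<le> q (fst z) then 1 else 0))"
    by (auto simp: ramp_slope_def fun_eq_iff)
  show ?thesis
    unfolding eq borel_prod[symmetric] by measurable
qed

lemma borel_measurable_ramp_slope [measurable]: "ramp_slope \<alpha> \<beta> p q \<in> borel_measurable borel"
  unfolding ramp_slope_def by measurable

lemma set_integrable_ramp_slope: "set_integrable lborel {a..b} (ramp_slope \<alpha> \<beta> p q)"
  unfolding set_integrable_def
  by (rule integrableI_bounded_set_indicator[where B = "\<bar>\<alpha>\<bar> + \<bar>\<beta> - \<alpha>\<bar>"])
    (auto simp: ramp_slope_def indicator_def emeasure_lborel_Icc_eq)

lemma set_integral_ramp_slope: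
  assumes "0 \<le> p" "p \<le> q" "0 \<le> x"
  shows "(LINT y:{0..x}|lborel. ramp_slope \<alpha> \<beta> p q y) = ramp \<alpha> \<beta> p q x"
proof -
  have "(\<lambda>y. indicator {0..x} y *\<^sub>R ramp_slope \<alpha> \<beta> p q y)
      = (\<lambda>y. \<alpha> * indicator {0..x} y + (\<beta> - \<alpha>) * indicator {p..min x q} y)"
    using assms by (auto simp: ramp_slope_def indicator_def fun_eq_iff)
  then have "(LINT y:{0..x}|lborel. ramp_slope \<alpha> \<beta> p q y)
      = \<alpha> * measure lborel {0..x} + (\<beta> - \<alpha>) * measure lborel {p..min x q}"
    by (simp add: set_lebesgue_integral_def)
  also have "\<dots> = ramp \<alpha> \<beta> p q x"
    using assms by (simp add: ramp_def)
  finally show ?thesis .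
qed

lemma
  assumes "0 \<le> p" "p \<le> q" "q \<le> 1"
  shows set_integrable_ramp_slope_square:
      "set_integrable lborel {0..1} (\<lambda>y. (ramp_slope \<alpha> \<beta> p q y)\<^sup>2)"
    and set_integral_ramp_slope_square:
      "(LINT y:{0..1}|lborel. (ramp_slope \<alpha> \<beta> p q y)\<^sup>2) = \<alpha>\<^sup>2 * (1 - (q - p)) + \<beta>\<^sup>2 * (q - p)"
proof -
  have split: "(\<lambda>y. indicator {0..1} y *\<^sub>R (ramp_slope \<alpha> \<beta> p q y)\<^sup>2)
      = (\<lambda>y. \<alpha>\<^sup>2 * indicator {0..<p} y + \<alpha>\<^sup>2 * indicator {q<..1} y + \<beta>\<^sup>2 * indicator {p..q} y)"
    using assms by (auto simp: ramp_slope_def indicator_def)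
  show "set_integrable lborel {0..1} (\<lambda>y. (ramp_slope \<alpha> \<beta> p q y)\<^sup>2)"
    using assms unfolding set_integrable_def split
    by auto
  have "(LINT y:{0..1}|lborel. (ramp_slope \<alpha> \<beta> p q y)\<^sup>2)
      = \<alpha>\<^sup>2 * measure lborel {0..<p} + \<alpha>\<^sup>2 * measure lborel {q<..1} + \<beta>\<^sup>2 * measure lborel {p..q}"
    using assms unfolding set_lebesgue_integral_def split
    by (subst Bochner_Integration.integral_add) auto
  also have "\<dots> = \<alpha>\<^sup>2 * (1 - (q - p)) + \<beta>\<^sup>2 * (q - p)"
    using assms by (simp add: algebra_simps)
  finally show "(LINT y:{0..1}|lborel. (ramp_slope \<alpha> \<beta> p q y)\<^sup>2) = \<alpha>\<^sup>2 * (1 - (q - p)) + \<beta>\<^sup>2 * (q - p)" .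
qed

definition squeeze :: "real \<Rightarrow> real" where
  "squeeze t = (cos (pi * t))\<^sup>2"

definition squeeze' :: "real \<Rightarrow> real" where
  "squeeze' t = - pi * sin (2 * pi * t)"

lemma squeeze_nonneg: "0 \<le> squeeze t"
  and squeeze_le_one: "squeeze t \<le> 1"
  by (simp_all add: squeeze_def abs_cos_le_one abs_square_le_1)

lemma squeeze_0 [simp]: "squeeze 0 = 1"
  and squeeze_1 [simp]: "squeeze 1 = 1"
  and squeeze_half [simp]: "squeeze (1/2) = 0"
  and squeeze'_half [simp]: "squeeze' (1/2) = 0"
  by (simp_all add: squeeze_def squeeze'_def cos_pi_half)

lemma squeeze'_square: "(squeeze' t)\<^sup>2 = 4 * pi\<^sup>2 * squeeze t * (1 - squeeze t)"
proof -
  have "sin (2 * pi * t) = 2 * sin (pi * t) * cos (pi * t)"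
    using sin_double[of "pi * t"] by (simp add: mult.assoc)
  then show ?thesis
    by (simp add: squeeze'_def squeeze_def power_mult_distrib sin_squared_eq)
qed

lemma squeeze'_degenerate: "squeeze t = 0 \<or> squeeze t = 1 \<Longrightarrow> squeeze' t = 0"
  using squeeze'_square[of t] by auto

lemma has_real_derivative_squeeze: "(squeeze has_real_derivative squeeze' t) (at t)"
proof -
  have "((\<lambda>t. (cos (pi * t))\<^sup>2) has_real_derivative 2 * cos (pi * t) * (- sin (pi * t) * pi)) (at t)"
    by (auto intro!: derivative_eq_intros)
  moreover have "2 * cos (pi * t) * (- sin (pi * t) * pi) = squeeze' t"
    using sin_double[of "pi * t"] by (simp add: squeeze'_def algebra_simps)
  ultimately show ?thesis
    by (simp add: squeeze_def[abs_def])
qed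

lemma continuous_on_squeeze: "continuous_on S squeeze"
  and continuous_on_squeeze': "continuous_on S squeeze'"
  unfolding squeeze_def[abs_def] squeeze'_def[abs_def] by (intro continuous_intros)+

lemma abs_squeeze'_le: "\<bar>squeeze' t\<bar> \<le> pi"
  by (simp add: squeeze'_def abs_mult)

lemma borel_measurable_squeeze [measurable]: "squeeze \<in> borel_measurable borel"
  and borel_measurable_squeeze' [measurable]: "squeeze' \<in> borel_measurable borel"
  by (intro borel_measurable_continuous_onI continuous_on_squeeze continuous_on_squeeze')+

text \<open>At the degenerate times \<open>squeeze t \<in> {0, 1}\<close> the slopes below are \<open>x / 0 = 0\<close>, which is
  harmless because \<open>squeeze' t = 0\<close> there.\<close>

definition outer_slope :: "real \<Rightarrow> real" where
  "outer_slope t = - squeeze' t / (1 - squeeze t)"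

definition inner_slope :: "real \<Rightarrow> real" where
  "inner_slope t = squeeze' t / squeeze t"

lemma outer_slope_mult: "outer_slope t * (1 - squeeze t) = - squeeze' t"
  using squeeze'_degenerate[of t] by (cases "squeeze t = 1") (auto simp: outer_slope_def)

lemma inner_slope_mult: "inner_slope t * squeeze t = squeeze' t"
  using squeeze'_degenerate[of t] by (cases "squeeze t = 0") (auto simp: inner_slope_def)

lemma slope_energy_le: "(outer_slope t)\<^sup>2 * (1 - squeeze t) + (inner_slope t)\<^sup>2 * squeeze t \<le> 4 * pi\<^sup>2"
proof (cases "squeeze t = 0 \<or> squeeze t = 1")
  case True
  then show ?thesis
    using squeeze'_degenerate[of t] by (auto simp: outer_slope_def inner_slope_def)
next
  case False
  then have "0 < squeeze t" "squeeze t < 1"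
    using squeeze_nonneg[of t] squeeze_le_one[of t] by auto
  then have "(outer_slope t)\<^sup>2 * (1 - squeeze t) = (squeeze' t)\<^sup>2 / (1 - squeeze t)"
    and "(inner_slope t)\<^sup>2 * squeeze t = (squeeze' t)\<^sup>2 / squeeze t"
    by (simp_all add: outer_slope_def inner_slope_def power_divide power2_eq_square)
  moreover have "(squeeze' t)\<^sup>2 / (1 - squeeze t) = 4 * pi\<^sup>2 * squeeze t"
    and "(squeeze' t)\<^sup>2 / squeeze t = 4 * pi\<^sup>2 * (1 - squeeze t)"
    using \<open>0 < squeeze t\<close> \<open>squeeze t < 1\<close> by (simp_all add: squeeze'_square field_simps)
  ultimately show ?thesis
    by (simp add: algebra_simps)
qed

definition squeeze_velocity :: "real \<Rightarrow> real \<Rightarrow> real" where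
  "squeeze_velocity t =
     ramp (outer_slope t) (inner_slope t) ((1 - squeeze t) / 2) ((1 + squeeze t) / 2)"

definition squeeze_velocity_slope :: "real \<Rightarrow> real \<Rightarrow> real" where
  "squeeze_velocity_slope t =
     ramp_slope (outer_slope t) (inner_slope t) ((1 - squeeze t) / 2) ((1 + squeeze t) / 2)"

lemma squeeze_interval:
  "0 \<le> (1 - squeeze t) / 2" "(1 - squeeze t) / 2 \<le> (1 + squeeze t) / 2" "(1 + squeeze t) / 2 \<le> 1"
  "(1 + squeeze t) / 2 - (1 - squeeze t) / 2 = squeeze t"
  using squeeze_nonneg[of t] squeeze_le_one[of t] by (simp_all add: field_simps)

lemma squeeze_image:
  assumes "0 \<le> h" "h \<le> 1"
  shows "(1 - squeeze t) / 2 \<le> 1/2 + squeeze t * (h - 1/2)"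
    and "1/2 + squeeze t * (h - 1/2) \<le> (1 + squeeze t) / 2"
proof -
  have "0 \<le> squeeze t * h" "squeeze t * h \<le> squeeze t"
    using assms squeeze_nonneg[of t] mult_left_mono[of h 1 "squeeze t"] by simp_all
  then show "(1 - squeeze t) / 2 \<le> 1/2 + squeeze t * (h - 1/2)"
    and "1/2 + squeeze t * (h - 1/2) \<le> (1 + squeeze t) / 2"
    by (simp_all add: field_simps)
qed

lemma squeeze_velocity_image:
  assumes "0 \<le> h" "h \<le> 1"
  shows "squeeze_velocity t (1/2 + squeeze t * (h - 1/2)) = squeeze' t * (h - 1/2)"
proof -
  from squeeze_image[OF assms] have "squeeze_velocity t (1/2 + squeeze t * (h - 1/2))
      = outer_slope t * (1 - squeeze t) / 2 + inner_slope t * squeeze t * h"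
    by (simp add: squeeze_velocity_def ramp_on_interval field_simps)
  also have "\<dots> = squeeze' t * (h - 1/2)"
    by (simp only: outer_slope_mult inner_slope_mult) (simp add: algebra_simps)
  finally show ?thesis .
qed

lemma borel_measurable_outer_slope: "outer_slope \<in> borel_measurable borel"
  unfolding outer_slope_def[abs_def] by measurable

lemma borel_measurable_inner_slope: "inner_slope \<in> borel_measurable borel"
  unfolding inner_slope_def[abs_def] by measurable

lemma borel_measurable_squeeze_velocity_slope:
  "(\<lambda>z. squeeze_velocity_slope (fst z) (snd z)) \<in> borel_measurable borel"
proof -
  have "(\<lambda>t. (1 - squeeze t) / 2) \<in> borel_measurable borel"
    and "(\<lambda>t. (1 + squeeze t) / 2) \<in> borel_measurable borel"
    by measurable measurable
  from borel_measurable_ramp_slope_param[OF borel_measurable_outer_slope borel_measurable_inner_slope this]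
  show ?thesis
    unfolding squeeze_velocity_slope_def .
qed

lemma L2_H10_squeeze_velocity: "L2_H10 squeeze_velocity"
  unfolding L2_H10_def
proof (intro exI[of _ squeeze_velocity_slope] conjI ballI)
  show "set_integrable lborel ({0..1} \<times> {0..1}) (\<lambda>z. (squeeze_velocity_slope (fst z) (snd z))\<^sup>2)"
    using borel_measurable_squeeze_velocity_slope squeeze_interval slope_energy_le
    by (intro set_integrable_square_of_bounded_sections[where B = "4 * pi\<^sup>2"])
      (simp_all add: squeeze_velocity_slope_def set_integrable_ramp_slope_square
        set_integral_ramp_slope_square emeasure_lborel_Icc_eq)
  fix t :: real
  show "H10_with_deriv (squeeze_velocity t) (squeeze_velocity_slope t)"
    unfolding H10_with_deriv_def squeeze_velocity_def squeeze_velocity_slope_def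
    using squeeze_interval[of t]
    by (simp add: set_integrable_ramp_slope set_integrable_ramp_slope_square set_integral_ramp_slope
        ramp_one outer_slope_mult inner_slope_mult)
qed (rule borel_measurable_squeeze_velocity_slope)

definition midpoint_path :: "real \<Rightarrow> real \<Rightarrow> real \<Rightarrow> real" where
  "midpoint_path a b t = 1/2 + squeeze (min t (1/2)) * (a - 1/2) + squeeze (max t (1/2)) * (b - 1/2)"

definition midpoint_path_speed :: "real \<Rightarrow> real \<Rightarrow> real \<Rightarrow> real" where
  "midpoint_path_speed a b t =
     squeeze' (min t (1/2)) * (a - 1/2) + squeeze' (max t (1/2)) * (b - 1/2)"

lemma midpoint_path_first_half:
  "t \<le> 1/2 \<Longrightarrow> midpoint_path a b t = 1/2 + squeeze t * (a - 1/2)"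
  "t \<le> 1/2 \<Longrightarrow> midpoint_path_speed a b t = squeeze' t * (a - 1/2)"
  by (simp_all add: midpoint_path_def midpoint_path_speed_def)

lemma midpoint_path_second_half:
  "1/2 \<le> t \<Longrightarrow> midpoint_path a b t = 1/2 + squeeze t * (b - 1/2)"
  "1/2 \<le> t \<Longrightarrow> midpoint_path_speed a b t = squeeze' t * (b - 1/2)"
  by (simp_all add: midpoint_path_def midpoint_path_speed_def)

lemma midpoint_path_0 [simp]: "midpoint_path a b 0 = a"
  and midpoint_path_1 [simp]: "midpoint_path a b 1 = b"
  by (simp_all add: midpoint_path_def)

lemma midpoint_path_mem:
  assumes "a \<in> {0..1}" "b \<in> {0..1}"
  shows "midpoint_path a b t \<in> {0..1}"
proof (cases "t \<le> 1/2")
  case True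
  then show ?thesis
    using assms squeeze_image[of a t] squeeze_interval[of t] by (auto simp: midpoint_path_first_half)
next
  case False
  then show ?thesis
    using assms squeeze_image[of b t] squeeze_interval[of t] by (auto simp: midpoint_path_second_half)
qed

lemma midpoint_path_mono: "a \<le> a' \<Longrightarrow> b \<le> b' \<Longrightarrow> midpoint_path a b t \<le> midpoint_path a' b' t"
  unfolding midpoint_path_def by (intro add_mono mult_left_mono squeeze_nonneg) auto

lemma squeeze_velocity_midpoint_path:
  assumes "a \<in> {0..1}" "b \<in> {0..1}"
  shows "squeeze_velocity t (midpoint_path a b t) = midpoint_path_speed a b t"
proof (cases "t \<le> 1/2")
  case True
  with assms show ?thesis
    by (simp add: midpoint_path_first_half squeeze_velocity_image)
next
  case False
  with assms show ?thesis
    by (simp add: midpoint_path_second_half squeeze_velocity_image)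
qed

lemma has_real_derivative_midpoint_path:
  assumes "t \<noteq> 1/2"
  shows "(midpoint_path a b has_real_derivative midpoint_path_speed a b t) (at t)"
proof (cases "t < 1/2")
  case True
  have "((\<lambda>r. 1/2 + squeeze r * (a - 1/2)) has_real_derivative squeeze' t * (a - 1/2)) (at t)"
    using has_real_derivative_squeeze[of t] by (auto intro!: derivative_eq_intros)
  then have "(midpoint_path a b has_real_derivative squeeze' t * (a - 1/2)) (at t)"
    by (rule has_field_derivative_transform_within_open[where S = "{..<1/2}"])
      (use True in \<open>auto simp: midpoint_path_first_half\<close>)
  with True show ?thesis
    by (simp add: midpoint_path_first_half)
next
  case False
  have "((\<lambda>r. 1/2 + squeeze r * (b - 1/2)) has_real_derivative squeeze' t * (b - 1/2)) (at t)"
    using has_real_derivative_squeeze[of t] by (auto intro!: derivative_eq_intros)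
  then have "(midpoint_path a b has_real_derivative squeeze' t * (b - 1/2)) (at t)"
    by (rule has_field_derivative_transform_within_open[where S = "{1/2<..}"])
      (use False assms in \<open>auto simp: midpoint_path_second_half\<close>)
  with False show ?thesis
    by (simp add: midpoint_path_second_half)
qed

lemma has_integral_midpoint_path_speed:
  assumes "s \<le> t"
  shows "(midpoint_path_speed a b has_integral midpoint_path a b t - midpoint_path a b s) {s..t}"
proof (rule fundamental_theorem_of_calculus_interior_strong[where S = "{1/2}"])
  fix r assume "r \<in> {s<..<t} - {1/2}"
  then show "(midpoint_path a b has_vector_derivative midpoint_path_speed a b r) (at r)"
    using has_real_derivative_midpoint_path[of r a b]
    by (simp add: has_real_derivative_iff_has_vector_derivative)
next
  show "continuous_on {s..t} (midpoint_path a b)"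
    unfolding midpoint_path_def[abs_def] squeeze_def by (intro continuous_intros)
qed (simp_all add: assms)

lemma abs_midpoint_path_speed_le:
  assumes "a \<in> {0..1}" "b \<in> {0..1}"
  shows "\<bar>midpoint_path_speed a b t\<bar> \<le> pi"
proof -
  have "\<bar>midpoint_path_speed a b t\<bar>
      \<le> \<bar>squeeze' (min t (1/2))\<bar> * \<bar>a - 1/2\<bar> + \<bar>squeeze' (max t (1/2))\<bar> * \<bar>b - 1/2\<bar>"
    unfolding midpoint_path_speed_def by (metis abs_mult abs_triangle_ineq)
  also have "\<dots> \<le> pi * (1/2) + pi * (1/2)"
    using assms by (intro add_mono mult_mono abs_squeeze'_le) (auto split: abs_split)
  finally show ?thesis
    by simp
qed

lemma
  assumes "a \<in> {0..1}" "b \<in> {0..1}" "s \<le> t"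
  shows set_integrable_squeeze_velocity_midpoint_path:
      "set_integrable lborel {s..t} (\<lambda>r. squeeze_velocity r (midpoint_path a b r))"
    and midpoint_path_integral_equation:
      "midpoint_path a b t - midpoint_path a b s
         = (LINT r:{s..t}|lborel. squeeze_velocity r (midpoint_path a b r))"
proof -
  have eq: "(\<lambda>r. squeeze_velocity r (midpoint_path a b r)) = midpoint_path_speed a b"
    using assms by (simp add: squeeze_velocity_midpoint_path)
  have "continuous_on {s..t} (midpoint_path_speed a b)"
    unfolding midpoint_path_speed_def[abs_def] squeeze'_def by (intro continuous_intros)
  then have integrable: "set_integrable lborel {s..t} (midpoint_path_speed a b)"
    by (rule borel_integrable_atLeastAtMost')
  then show "set_integrable lborel {s..t} (\<lambda>r. squeeze_velocity r (midpoint_path a b r))"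
    unfolding eq .
  show "midpoint_path a b t - midpoint_path a b s
      = (LINT r:{s..t}|lborel. squeeze_velocity r (midpoint_path a b r))"
    unfolding eq set_borel_integral_eq_integral(2)[OF integrable]
    using has_integral_midpoint_path_speed[OF \<open>s \<le> t\<close>, of a b] by (rule integral_unique[symmetric])
qed

lemma abs_cont_on_midpoint_path:
  assumes "a \<in> {0..1}" "b \<in> {0..1}"
  shows "abs_cont_on 0 1 (midpoint_path a b)"
proof (rule abs_cont_on_lipschitz[where L = pi])
  fix s t :: real assume "0 \<le> s" "s \<le> t" "t \<le> 1"
  have "norm (midpoint_path a b t - midpoint_path a b s) \<le> pi * Henstock_Kurzweil_Integration.content {s..t}"
    using has_integral_midpoint_path_speed[OF \<open>s \<le> t\<close>] abs_midpoint_path_speed_le[OF assms]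
    by (intro has_integral_bound_real[where S = "{}"]) auto
  then show "\<bar>midpoint_path a b t - midpoint_path a b s\<bar> \<le> pi * (t - s)"
    using \<open>s \<le> t\<close> by simp
qed simp

lemma lagrangian_flow_midpoint_path:
  assumes "f ` {0..1} \<subseteq> {0..1}" "g ` {0..1} \<subseteq> {0..1}"
    and "mono_on {0..1} f" "mono_on {0..1} g"
  shows "lagrangian_flow squeeze_velocity (\<lambda>t x. midpoint_path (f x) (g x) t)"
  unfolding lagrangian_flow_def
proof (intro conjI ballI allI impI)
  fix t :: real
  show "mono_on {0..1} (\<lambda>x. midpoint_path (f x) (g x) t)"
    using assms(3,4) by (intro mono_onI midpoint_path_mono) (auto simp: mono_on_def)
  fix x :: real assume "x \<in> {0..1}"
  then have ab: "f x \<in> {0..1}" "g x \<in> {0..1}"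
    using assms(1,2) by blast+
  then show "midpoint_path (f x) (g x) t \<in> {0..1}"
    by (rule midpoint_path_mem)
next
  fix x :: real assume "x \<in> {0..1}"
  then have ab: "f x \<in> {0..1}" "g x \<in> {0..1}"
    using assms(1,2) by blast+
  then show "abs_cont_on 0 1 (\<lambda>t. midpoint_path (f x) (g x) t)"
    by (simp add: abs_cont_on_midpoint_path)
  fix s t :: real assume "0 \<le> s \<and> s < t \<and> t \<le> 1"
  then show "set_integrable lborel {s..t} (\<lambda>r. squeeze_velocity r (midpoint_path (f x) (g x) r))"
    and "midpoint_path (f x) (g x) t - midpoint_path (f x) (g x) s
      = (LINT r:{s..t}|lborel. squeeze_velocity r (midpoint_path (f x) (g x) r))"
    using ab by (simp_all add: set_integrable_squeeze_velocity_midpoint_path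
        midpoint_path_integral_equation)
qed

lemma flow_rel_Mon_plus:
  assumes "f \<in> Mon_plus" "g \<in> Mon_plus"
  shows "flow_rel f g"
  unfolding flow_rel_def
proof (intro exI conjI)
  show "L2_H10 squeeze_velocity"
    by (rule L2_H10_squeeze_velocity)
  show "lagrangian_flow squeeze_velocity (\<lambda>t x. midpoint_path (f x) (g x) t)"
    using assms by (intro lagrangian_flow_midpoint_path) (auto simp: Mon_plus_def)
qed simp

theorem mainTheorem3:
  shows "(\<forall>f\<in>Mon_plus. \<forall>g\<in>Mon_plus. flow_rel f g \<longrightarrow> flow_rel g f) \<and>
         (\<forall>f\<in>Mon_plus. \<forall>g\<in>Mon_plus. \<forall>h\<in>Mon_plus.
            flow_rel f g \<and> flow_rel g h \<longrightarrow> flow_rel f h) \<and>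
         (\<forall>f\<in>Mon_plus. \<forall>g\<in>Mon_plus. flow_rel f g)"
  using flow_rel_Mon_plus by blast

end
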